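(* Let $A$ be a finite-dimensional real associative algebra with unit $u$, and let $\{\cdot,\cdot\}$ be a quadratic Poisson bracket on $A$ compatible with its multiplication, with dual map $\delta\colon\mathrm{Symm}(A\otimes A)\to A\wedge A$. Then the group $A^\times$ of invertible elements of $A$ (an open subset of $A$), equipped with the restriction of this bracket, is a Poisson Lie group, and its tangent Lie bialgebra is $A_L$ with cocommutator $\Delta(x)=\delta(x\otimes u+u\otimes x)$.
   Context: $A_L$ is the Lie algebra on $A$ with bracket $[a,b]=ab-ba$ (the Lie algebra of $A^\times$). A quadratic Poisson bracket on $A$ is a Poisson bracket on $C^\infty(A)$ such that the bracket of two linear functions (elements of $A^*$) is a homogeneous quadratic function; it is encoded by $\delta^*(\xi\wedge\eta)=\{\xi,\eta\}\in\mathrm{Sym}^2(A^* )$, and $\delta$ is the dual map, with $\mathrm{Symm}(A\otimes A)$ (symmetric tensors) identified with $(\mathrm{Sym}^2A^* )^*$ and $A\wedge A$ (skew-symmetric tensors) with $(A^*\wedge A^* )^*$. Compatibility with the multiplication means that the multiplication map $A\times A\to A$ is a Poisson map when $A\times A$ carries the product Poisson structure. A Poisson Lie group is a Lie group with a Poisson bracket such that the group multiplication $G\times G\to G$ is a Poisson map; its tangent Lie bialgebra is the Lie algebra with cocommutator given by the linearization of the Poisson tensor at the identity. *)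

theory Defs
  imports "HOL-Analysis.Analysis"
begin

fun iter_dd :: "'a::real_normed_vector list \<Rightarrow> ('a \<Rightarrow> 'b::real_normed_vector) \<Rightarrow> 'a \<Rightarrow> 'b" where
  "iter_dd [] f = f"
| "iter_dd (v # vs) f =
     (\<lambda>x. Lim (at (0::real)) (\<lambda>t. (iter_dd vs f (x + t *\<^sub>R v) - iter_dd vs f x) /\<^sub>R t))"

definition smooth_on :: "'a::real_normed_vector set \<Rightarrow> ('a \<Rightarrow> 'b::real_normed_vector) \<Rightarrow> bool" where
  "smooth_on S f \<longleftrightarrow> open S
     \<and> (\<forall>vs. continuous_on S (iter_dd vs f))
     \<and> (\<forall>vs v. \<forall>x\<in>S. ((\<lambda>t::real. (iter_dd vs f (x + t *\<^sub>R v) - iter_dd vs f x) /\<^sub>R t)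
                          \<longlongrightarrow> iter_dd (v # vs) f x) (at 0))"

text \<open>A bivector field on (an open subset of) a finite-dimensional real vector space V:
  at each point a, P a is a skew bilinear form on covectors (linear functionals V \<Rightarrow> real).\<close>
type_synonym 'a bivector_field = "'a \<Rightarrow> ('a \<Rightarrow> real) \<Rightarrow> ('a \<Rightarrow> real) \<Rightarrow> real"

definition pbracket :: "'a::real_normed_vector bivector_field \<Rightarrow> ('a \<Rightarrow> real) \<Rightarrow> ('a \<Rightarrow> real) \<Rightarrow> 'a \<Rightarrow> real" where
  "pbracket P f g = (\<lambda>a. P a (frechet_derivative f (at a)) (frechet_derivative g (at a)))"

text \<open>Poisson structure on an open set U: P is skew, bilinear on covectors, smooth,
  and satisfies the Jacobi identity (checked on linear coordinate functions, which is
  equivalent to the Jacobi identity of the induced bracket on all smooth functions).\<close>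
definition poisson_on :: "'a::euclidean_space set \<Rightarrow> 'a bivector_field \<Rightarrow> bool" where
  "poisson_on U P \<longleftrightarrow> open U
    \<and> (\<forall>a\<in>U. \<forall>\<xi> \<eta>. linear \<xi> \<longrightarrow> linear \<eta> \<longrightarrow> P a \<xi> \<eta> = - P a \<eta> \<xi>)
    \<and> (\<forall>a\<in>U. \<forall>\<xi>1 \<xi>2 \<eta> c. linear \<xi>1 \<longrightarrow> linear \<xi>2 \<longrightarrow> linear \<eta> \<longrightarrow>
          P a (\<lambda>v. \<xi>1 v + c * \<xi>2 v) \<eta> = P a \<xi>1 \<eta> + c * P a \<xi>2 \<eta>)
    \<and> (\<forall>\<xi> \<eta>. linear \<xi> \<longrightarrow> linear \<eta> \<longrightarrow> smooth_on U (\<lambda>a. P a \<xi> \<eta>))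
    \<and> (\<forall>a\<in>U. \<forall>\<xi>1 \<xi>2 \<xi>3. linear \<xi>1 \<longrightarrow> linear \<xi>2 \<longrightarrow> linear \<xi>3 \<longrightarrow>
          pbracket P \<xi>1 (pbracket P \<xi>2 \<xi>3) a + pbracket P \<xi>2 (pbracket P \<xi>3 \<xi>1) a
          + pbracket P \<xi>3 (pbracket P \<xi>1 \<xi>2) a = 0)"

definition quadratic_bivector :: "'a::euclidean_space bivector_field \<Rightarrow> bool" where
  "quadratic_bivector P \<longleftrightarrow>
     (\<forall>\<xi> \<eta>. linear \<xi> \<longrightarrow> linear \<eta> \<longrightarrow>
        (\<exists>B::'a \<Rightarrow> 'a \<Rightarrow> real. bilinear B \<and> (\<forall>a. P a \<xi> \<eta> = B a a)))"

definition prod_bivector :: "'a::euclidean_space bivector_field \<Rightarrow> 'b::euclidean_space bivector_field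
    \<Rightarrow> ('a \<times> 'b) bivector_field" where
  "prod_bivector P Q = (\<lambda>(a, b) \<xi> \<eta>.
      P a (\<lambda>x. \<xi> (x, 0)) (\<lambda>x. \<eta> (x, 0)) + Q b (\<lambda>y. \<xi> (0, y)) (\<lambda>y. \<eta> (0, y)))"

definition poisson_map :: "'a::euclidean_space set \<Rightarrow> 'a bivector_field \<Rightarrow>
    'b::euclidean_space set \<Rightarrow> 'b bivector_field \<Rightarrow> ('a \<Rightarrow> 'b) \<Rightarrow> bool" where
  "poisson_map U P V Q \<phi> \<longleftrightarrow> \<phi> ` U \<subseteq> V \<and> smooth_on U \<phi>
     \<and> (\<forall>p\<in>U. \<forall>\<xi> \<eta>. linear \<xi> \<longrightarrow> linear \<eta> \<longrightarrow>
          Q (\<phi> p) \<xi> \<eta> = P p (\<xi> \<circ> frechet_derivative \<phi> (at p)) (\<eta> \<circ> frechet_derivative \<phi> (at p)))"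

definition lie_group_on :: "'a::euclidean_space set \<Rightarrow> ('a \<Rightarrow> 'a \<Rightarrow> 'a) \<Rightarrow> 'a \<Rightarrow> bool" where
  "lie_group_on G m e \<longleftrightarrow> open G \<and> e \<in> G
     \<and> (\<forall>g\<in>G. \<forall>h\<in>G. m g h \<in> G)
     \<and> (\<forall>g\<in>G. \<forall>h\<in>G. \<forall>k\<in>G. m (m g h) k = m g (m h k))
     \<and> (\<forall>g\<in>G. m e g = g \<and> m g e = g)
     \<and> smooth_on (G \<times> G) (\<lambda>(g, h). m g h)
     \<and> (\<exists>inv. (\<forall>g\<in>G. inv g \<in> G \<and> m g (inv g) = e \<and> m (inv g) g = e) \<and> smooth_on G inv)"

definition poisson_lie_group_on :: "'a::euclidean_space set \<Rightarrow> ('a \<Rightarrow> 'a \<Rightarrow> 'a) \<Rightarrow> 'a \<Rightarrow>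
    'a bivector_field \<Rightarrow> bool" where
  "poisson_lie_group_on G m e P \<longleftrightarrow> lie_group_on G m e \<and> poisson_on G P
     \<and> poisson_map (G \<times> G) (prod_bivector P P) G P (\<lambda>(g, h). m g h)"

definition tangent_lie_bracket :: "('a::real_normed_vector \<Rightarrow> 'a \<Rightarrow> 'a) \<Rightarrow> 'a \<Rightarrow> 'a \<Rightarrow> 'a \<Rightarrow> 'a" where
  "tangent_lie_bracket m e x y =
     vector_derivative (\<lambda>s. vector_derivative (\<lambda>t. m (e + s *\<^sub>R x) (e + t *\<^sub>R y)) (at 0)) (at 0)
   - vector_derivative (\<lambda>s. vector_derivative (\<lambda>t. m (e + s *\<^sub>R y) (e + t *\<^sub>R x)) (at 0)) (at 0)"

text \<open>Cocommutator of the tangent Lie bialgebra: linearization of the Poisson tensor at e,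
  as an element of g \<wedge> g viewed as a skew form on covectors.\<close>
definition tangent_cocommutator :: "'a::real_normed_vector bivector_field \<Rightarrow> 'a \<Rightarrow> 'a \<Rightarrow>
    ('a \<Rightarrow> real) \<Rightarrow> ('a \<Rightarrow> real) \<Rightarrow> real" where
  "tangent_cocommutator P e x \<xi> \<eta> = frechet_derivative (\<lambda>a. P a \<xi> \<eta>) (at e) x"

definition units_of_alg :: "('a \<Rightarrow> 'a \<Rightarrow> 'a) \<Rightarrow> 'a \<Rightarrow> 'a set" where
  "units_of_alg m u = {a. \<exists>b. m a b = u \<and> m b a = u}"

text \<open>The dual map delta : Symm(A \<otimes> A) \<rightarrow> A \<wedge> A of a quadratic bracket, evaluated on the
  symmetric tensor x \<otimes> y + y \<otimes> x (elements of A \<wedge> A viewed as skew forms on covectors).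
  With the quadratic function {xi,eta}(a) = <delta*(xi \<wedge> eta), a \<otimes> a>, polarization gives
  <delta*(xi \<wedge> eta), x \<otimes> y + y \<otimes> x> = {xi,eta}(x+y) - {xi,eta}(x) - {xi,eta}(y).\<close>
definition delta_sym :: "'a::real_normed_vector bivector_field \<Rightarrow> 'a \<Rightarrow> 'a \<Rightarrow>
    ('a \<Rightarrow> real) \<Rightarrow> ('a \<Rightarrow> real) \<Rightarrow> real" where
  "delta_sym P x y \<xi> \<eta> = P (x + y) \<xi> \<eta> - P x \<xi> \<eta> - P y \<xi> \<eta>"

end

theory Submission
  imports Defs
begin

(* Openness of A^x comes from finite dimensionality: near a unit a, an element y with y x = 0
   would give x = -a^-1 ((y - a) x), impossible for small y - a unless x = 0, and an injective
   left multiplication is invertible. The resolvent identity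
   y^-1 - a^-1 = -y^-1 (y - a) a^-1 shows that inversion has derivative v \<mapsto> -a^-1 v a^-1,
   which is again built from inversion, constants, products and sums; this class of maps is
   closed under directional derivatives, so inversion is smooth. The Poisson structure and its
   compatibility with the multiplication (which includes smoothness of the multiplication)
   restrict from A to the open set A^x. The Lie bracket
   is read off from the mixed derivative of (s, t) \<mapsto> (u + s x)(u + t y), which is x y.
   Finally {xi, eta}(a) = B(a, a) for a bilinear B, whose derivative at u in direction x is
   B(u, x) + B(x, u) = B(x + u, x + u) - B(x, x) - B(u, u), i.e. delta(x \<otimes> u + u \<otimes> x). *)

lemma has_derivative_difference_quotient_tendsto:
  fixes f :: "'a::real_normed_vector \<Rightarrow> 'b::real_normed_vector"
  assumes "(f has_derivative D) (at x)"
  shows "((\<lambda>t::real. (f (x + t *\<^sub>R v) - f x) /\<^sub>R t) \<longlongrightarrow> D v) (at 0)"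
proof -
  have "bounded_linear D"
    using assms has_derivative_bounded_linear by blast
  then have scale: "D (t *\<^sub>R v) = t *\<^sub>R D v" for t
    by (simp add: linear_simps)
  have "((\<lambda>t::real. x + t *\<^sub>R v) has_derivative (\<lambda>t. t *\<^sub>R v)) (at 0)"
    by (auto intro!: derivative_eq_intros)
  from has_derivative_compose[OF this, of f D] assms
  have "((\<lambda>t. f (x + t *\<^sub>R v)) has_derivative (\<lambda>t. t *\<^sub>R D v)) (at 0)"
    by (simp add: scale)
  then have "((\<lambda>t. norm (f (x + t *\<^sub>R v) - f x - t *\<^sub>R D v) / norm t) \<longlongrightarrow> 0) (at 0)"
    unfolding has_derivative_at by simp
  then have "((\<lambda>t. norm ((f (x + t *\<^sub>R v) - f x) /\<^sub>R t - D v)) \<longlongrightarrow> 0) (at 0)"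
  proof (rule Lim_transform_eventually)
    have "norm (f (x + t *\<^sub>R v) - f x - t *\<^sub>R D v) / norm t
        = norm ((f (x + t *\<^sub>R v) - f x) /\<^sub>R t - D v)" if "t \<noteq> 0" for t :: real
    proof -
      have "(f (x + t *\<^sub>R v) - f x) /\<^sub>R t - D v = (f (x + t *\<^sub>R v) - f x - t *\<^sub>R D v) /\<^sub>R t"
        using that by (simp add: algebra_simps)
      then show ?thesis
        by (simp add: divide_inverse_commute)
    qed
    then show "\<forall>\<^sub>F t in at 0. norm (f (x + t *\<^sub>R v) - f x - t *\<^sub>R D v) / norm t
        = norm ((f (x + t *\<^sub>R v) - f x) /\<^sub>R t - D v)"
      by (auto simp: eventually_at_filter)
  qed
  then show ?thesis
    by (simp add: tendsto_norm_zero_iff LIM_zero_iff)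
qed

lemma eventually_at_0_line_in_open:
  fixes x :: "'a::real_normed_vector"
  assumes "open S" "x \<in> S"
  shows "\<forall>\<^sub>F t in at (0::real). x + t *\<^sub>R v \<in> S"
proof -
  have "((\<lambda>t::real. x + t *\<^sub>R v) \<longlongrightarrow> x + 0 *\<^sub>R v) (at 0)"
    by (intro tendsto_intros)
  then show ?thesis
    using assms topological_tendstoD by fastforce
qed

lemma iter_dd_Cons_eq_derivative:
  assumes "open S" "x \<in> S" "\<forall>y\<in>S. iter_dd vs f y = g y" "(g has_derivative D) (at x)"
  shows "((\<lambda>t::real. (iter_dd vs f (x + t *\<^sub>R v) - iter_dd vs f x) /\<^sub>R t) \<longlongrightarrow> D v) (at 0)"
    and "iter_dd (v # vs) f x = D v"
proof -
  have "\<forall>\<^sub>F t in at 0. (g (x + t *\<^sub>R v) - g x) /\<^sub>R t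
      = (iter_dd vs f (x + t *\<^sub>R v) - iter_dd vs f x) /\<^sub>R t"
    using eventually_at_0_line_in_open[OF assms(1,2), of v] by eventually_elim (use assms in auto)
  with has_derivative_difference_quotient_tendsto[OF assms(4)]
  show lim: "((\<lambda>t::real. (iter_dd vs f (x + t *\<^sub>R v) - iter_dd vs f x) /\<^sub>R t) \<longlongrightarrow> D v) (at 0)"
    by (rule Lim_transform_eventually)
  show "iter_dd (v # vs) f x = D v"
    using tendsto_Lim[OF _ lim] by simp
qed

lemma smooth_on_derivative_closed_family:
  fixes F :: "('a::real_normed_vector \<Rightarrow> 'b::real_normed_vector) set"
  assumes S: "open S"
    and closed: "\<And>f. f \<in> F \<Longrightarrow>
      \<exists>D. (\<forall>x\<in>S. (f has_derivative D x) (at x)) \<and> (\<forall>v. (\<lambda>x. D x v) \<in> F)"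
    and "f \<in> F"
  shows "smooth_on S f"
proof -
  have iter_dd_in_F: "\<exists>g\<in>F. \<forall>x\<in>S. iter_dd vs f x = g x" for vs
  proof (induction vs)
    case Nil
    then show ?case using \<open>f \<in> F\<close> by auto
  next
    case (Cons v vs)
    then obtain g D where g: "\<forall>x\<in>S. iter_dd vs f x = g x"
      and D: "\<forall>x\<in>S. (g has_derivative D x) (at x)" "\<forall>v. (\<lambda>x. D x v) \<in> F"
      using closed by blast
    have "iter_dd (v # vs) f x = D x v" if "x \<in> S" for x
      using iter_dd_Cons_eq_derivative(2)[OF S that g] D(1) that by blast
    with D(2) show ?case
      by (intro bexI[of _ "\<lambda>x. D x v"]) auto
  qed
  have "continuous_on S (iter_dd vs f) \<and>
    (\<forall>v. \<forall>x\<in>S. ((\<lambda>t::real. (iter_dd vs f (x + t *\<^sub>R v) - iter_dd vs f x) /\<^sub>R t)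
                   \<longlongrightarrow> iter_dd (v # vs) f x) (at 0))" for vs
  proof -
    obtain g D where g: "\<forall>x\<in>S. iter_dd vs f x = g x"
      and D: "\<forall>x\<in>S. (g has_derivative D x) (at x)"
      using iter_dd_in_F closed by blast
    have "continuous_on S g"
      using D has_derivative_continuous continuous_at_imp_continuous_on by blast
    then have "continuous_on S (iter_dd vs f)"
      using continuous_on_cong g by metis
    moreover have "((\<lambda>t::real. (iter_dd vs f (x + t *\<^sub>R v) - iter_dd vs f x) /\<^sub>R t)
        \<longlongrightarrow> iter_dd (v # vs) f x) (at 0)" if "x \<in> S" for x v
      using iter_dd_Cons_eq_derivative[OF S that g D[rule_format, OF that]] by simp
    ultimately show ?thesis by blast
  qed
  then show ?thesis
    using S unfolding smooth_on_def by blast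
qed

lemma smooth_on_subset:
  assumes "smooth_on T f" "open S" "S \<subseteq> T"
  shows "smooth_on S f"
  using assms unfolding smooth_on_def by (auto intro: continuous_on_subset)

lemma has_derivative_if_quadratic_remainder:
  fixes f :: "'a::real_normed_vector \<Rightarrow> 'b::real_normed_vector"
  assumes "bounded_linear D" "r > 0"
    and "\<And>y. norm (y - a) < r \<Longrightarrow> norm (f y - f a - D (y - a)) \<le> M * (norm (y - a))\<^sup>2"
  shows "(f has_derivative D) (at a)"
  unfolding has_derivative_iff_norm
proof
  have "norm (norm (f y - f a - D (y - a)) / norm (y - a)) \<le> M * norm (y - a)"
    if "y \<noteq> a" "dist y a < r" for y
  proof -
    have "norm (f y - f a - D (y - a)) \<le> M * norm (y - a) * norm (y - a)"
      using assms(3)[of y] that by (simp add: dist_norm power2_eq_square mult.assoc)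
    moreover have "norm (y - a) > 0"
      using that by simp
    ultimately show ?thesis
      by (simp add: pos_divide_le_eq)
  qed
  then have "\<forall>\<^sub>F y in at a. norm (norm (f y - f a - D (y - a)) / norm (y - a)) \<le> M * norm (y - a)"
    using \<open>r > 0\<close> by (auto simp: eventually_at)
  moreover have "((\<lambda>y. M * norm (y - a)) \<longlongrightarrow> 0) (at a)"
    by (intro tendsto_eq_intros) auto
  ultimately show "((\<lambda>y. norm (f y - f a - D (y - a)) / norm (y - a)) \<longlongrightarrow> 0) (at a)"
    by (rule Lim_null_comparison)
qed fact

lemma poisson_on_subset:
  assumes "poisson_on T P" "open S" "S \<subseteq> T"
  shows "poisson_on S P"
proof -
  have "\<forall>\<xi> \<eta>. linear \<xi> \<longrightarrow> linear \<eta> \<longrightarrow> smooth_on T (\<lambda>a. P a \<xi> \<eta>)"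
    using assms(1) unfolding poisson_on_def by blast
  then have "\<forall>\<xi> \<eta>. linear \<xi> \<longrightarrow> linear \<eta> \<longrightarrow> smooth_on S (\<lambda>a. P a \<xi> \<eta>)"
    using smooth_on_subset[OF _ assms(2,3)] by blast
  with assms show ?thesis
    unfolding poisson_on_def by (meson subsetD)
qed

lemma poisson_map_subset:
  assumes "poisson_map U P V Q \<phi>" "open U'" "U' \<subseteq> U" "\<phi> ` U' \<subseteq> V'"
  shows "poisson_map U' P V' Q \<phi>"
proof -
  have "smooth_on U' \<phi>"
    using assms(1) smooth_on_subset[OF _ assms(2,3)] unfolding poisson_map_def by blast
  with assms show ?thesis
    unfolding poisson_map_def by (meson subsetD)
qed

lemma frechet_derivative_diagonal_bilinear:
  fixes B :: "'a::euclidean_space \<Rightarrow> 'a \<Rightarrow> real"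
  assumes "bilinear B"
  shows "frechet_derivative (\<lambda>a. B a a) (at e) = (\<lambda>x. B e x + B x e)"
proof -
  interpret B: bounded_bilinear B
    using assms bilinear_conv_bounded_bilinear by blast
  have "((\<lambda>a. B a a) has_derivative (\<lambda>x. B e x + B x e)) (at e)"
    by (rule B.FDERIV[OF has_derivative_ident has_derivative_ident])
  then show ?thesis
    by (rule frechet_derivative_at[symmetric])
qed

lemma tangent_cocommutator_quadratic:
  assumes "quadratic_bivector P" "linear \<xi>" "linear \<eta>"
  shows "tangent_cocommutator P e x \<xi> \<eta> = delta_sym P x e \<xi> \<eta>"
proof -
  obtain B :: "'a \<Rightarrow> 'a \<Rightarrow> real" where B: "bilinear B" "\<And>a. P a \<xi> \<eta> = B a a"
    using assms unfolding quadratic_bivector_def by blast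
  interpret B: bounded_bilinear B
    using B(1) bilinear_conv_bounded_bilinear by blast
  have "(\<lambda>a. P a \<xi> \<eta>) = (\<lambda>a. B a a)"
    using B(2) by simp
  then show ?thesis
    unfolding tangent_cocommutator_def delta_sym_def
    by (simp add: frechet_derivative_diagonal_bilinear[OF B(1)] B(2) B.add_left B.add_right)
qed

locale unital_algebra =
  fixes mult :: "'a::euclidean_space \<Rightarrow> 'a \<Rightarrow> 'a" and u :: 'a
  assumes bilinear: "bilinear mult"
    and assoc: "mult (mult a b) c = mult a (mult b c)"
    and mult_unit_left: "mult u a = a"
    and mult_unit_right: "mult a u = a"
begin

sublocale mult_bil: bounded_bilinear mult
  using bilinear bilinear_conv_bounded_bilinear by blast

abbreviation units :: "'a set" where
  "units \<equiv> units_of_alg mult u"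

definition inv_unit :: "'a \<Rightarrow> 'a" where
  "inv_unit a = (SOME b. mult a b = u \<and> mult b a = u)"

lemma inv_unit:
  assumes "a \<in> units"
  shows "mult a (inv_unit a) = u" "mult (inv_unit a) a = u"
proof -
  have "\<exists>b. mult a b = u \<and> mult b a = u"
    using assms unfolding units_of_alg_def by blast
  then show "mult a (inv_unit a) = u" "mult (inv_unit a) a = u"
    unfolding inv_unit_def by (metis (mono_tags, lifting) someI_ex)+
qed

lemma inv_unit_in_units: "a \<in> units \<Longrightarrow> inv_unit a \<in> units"
  using inv_unit unfolding units_of_alg_def by blast

lemma unit_in_units: "u \<in> units"
  using mult_unit_left unfolding units_of_alg_def by blast

lemma mult_in_units:
  assumes "a \<in> units" "b \<in> units"
  shows "mult a b \<in> units"
proof -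
  have "mult (mult a b) (mult (inv_unit b) (inv_unit a)) = u"
    "mult (mult (inv_unit b) (inv_unit a)) (mult a b) = u"
    using inv_unit[OF assms(1)] inv_unit[OF assms(2)] by (metis assoc mult_unit_left)+
  then show ?thesis
    unfolding units_of_alg_def by blast
qed

lemma in_units_if_injective:
  assumes "\<And>x. mult c x = 0 \<Longrightarrow> x = 0"
  shows "c \<in> units"
proof -
  have "linear (mult c)"
    using mult_bil.bounded_linear_right bounded_linear.linear by blast
  moreover have inj: "inj (mult c)"
    by (rule injI) (metis assms mult_bil.diff_right eq_iff_diff_eq_0)
  ultimately obtain d where d: "mult c d = u"
    using linear_injective_imp_surjective by (metis surjD)
  have "mult c (mult d c) = mult c u"
    using d by (metis assoc mult_unit_left mult_unit_right)
  then have "mult d c = u"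
    using inj by (simp add: inj_eq)
  with d show ?thesis
    unfolding units_of_alg_def by blast
qed

definition mult_bound :: real where
  "mult_bound = (SOME K. K > 0 \<and> (\<forall>a b. norm (mult a b) \<le> norm a * norm b * K))"

lemma mult_bound_pos: "mult_bound > 0"
  and norm_mult_le: "norm (mult a b) \<le> mult_bound * norm a * norm b"
proof -
  have "mult_bound > 0 \<and> (\<forall>a b. norm (mult a b) \<le> norm a * norm b * mult_bound)"
    unfolding mult_bound_def using someI_ex[OF mult_bil.pos_bounded] .
  then show "mult_bound > 0" "norm (mult a b) \<le> mult_bound * norm a * norm b"
    by (simp_all add: ac_simps)
qed

lemma norm_mult_le_of_le:
  assumes "norm a \<le> A" "norm b \<le> B"
  shows "norm (mult a b) \<le> mult_bound * A * B"
proof -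
  have "0 \<le> A"
    using assms(1) norm_ge_zero order_trans by blast
  then have "mult_bound * norm a * norm b \<le> mult_bound * A * B"
    using assms mult_bound_pos by (intro mult_mono mult_left_mono) auto
  then show ?thesis
    using norm_mult_le order_trans by blast
qed

lemma in_units_if_near_unit:
  assumes a: "a \<in> units"
    and small: "mult_bound * mult_bound * norm (inv_unit a) * norm (y - a) < 1"
  shows "y \<in> units"
proof (rule in_units_if_injective, rule ccontr)
  fix x assume "mult y x = 0" "x \<noteq> 0"
  have "mult (y - a) x = - mult a x"
    using \<open>mult y x = 0\<close> by (simp add: mult_bil.diff_left)
  then have "mult (inv_unit a) (mult (y - a) x) = - x"
    by (simp add: mult_bil.minus_right assoc[symmetric] inv_unit(2)[OF a] mult_unit_left)
  then have "norm x = norm (mult (inv_unit a) (mult (y - a) x))"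
    by simp
  also have "\<dots> \<le> mult_bound * norm (inv_unit a) * (mult_bound * norm (y - a) * norm x)"
    by (intro norm_mult_le_of_le order_refl norm_mult_le)
  also have "\<dots> = (mult_bound * mult_bound * norm (inv_unit a) * norm (y - a)) * norm x"
    by (simp add: ac_simps)
  also have "\<dots> < norm x"
    using small \<open>x \<noteq> 0\<close> by simp
  finally show False by simp
qed

lemma open_units: "open units"
  unfolding open_dist
proof (intro ballI)
  fix a assume a: "a \<in> units"
  define q where "q = mult_bound * mult_bound * (norm (inv_unit a) + 1)"
  have "q > 0"
    using mult_bound_pos by (simp add: q_def add_nonneg_pos)
  have "y \<in> units" if "dist y a < 1 / q" for y
  proof (rule in_units_if_near_unit[OF a])
    have "norm (y - a) * q < 1"
      using that pos_less_divide_eq[OF \<open>q > 0\<close>] by (simp add: dist_norm)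
    then have "mult_bound * mult_bound * (norm (inv_unit a) + 1) * norm (y - a) < 1"
      by (metis q_def mult.commute)
    moreover have "mult_bound * mult_bound * norm (inv_unit a) * norm (y - a)
        \<le> mult_bound * mult_bound * (norm (inv_unit a) + 1) * norm (y - a)"
      using mult_bound_pos by (intro mult_right_mono mult_left_mono) auto
    ultimately show "mult_bound * mult_bound * norm (inv_unit a) * norm (y - a) < 1"
      by linarith
  qed
  moreover have "1 / q > 0"
    using \<open>q > 0\<close> by simp
  ultimately show "\<exists>e>0. \<forall>y. dist y a < e \<longrightarrow> y \<in> units"
    by blast
qed

lemma inv_unit_diff:
  assumes a: "a \<in> units" and y: "y \<in> units"
  shows "inv_unit y - inv_unit a = - mult (mult (inv_unit y) (y - a)) (inv_unit a)"
proof -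
  have "mult (mult (inv_unit y) (y - a)) (inv_unit a)
      = mult (mult (inv_unit y) y) (inv_unit a) - mult (inv_unit y) (mult a (inv_unit a))"
    by (simp add: mult_bil.diff_right mult_bil.diff_left assoc)
  also have "\<dots> = inv_unit a - inv_unit y"
    by (simp add: inv_unit[OF a] inv_unit[OF y] mult_unit_left mult_unit_right)
  finally show ?thesis by simp
qed

lemma inv_unit_diff_second_order:
  assumes "a \<in> units" "y \<in> units"
  shows "inv_unit y - inv_unit a + mult (mult (inv_unit a) (y - a)) (inv_unit a)
    = mult (mult (mult (mult (inv_unit y) (y - a)) (inv_unit a)) (y - a)) (inv_unit a)"
proof -
  have "inv_unit a - inv_unit y = mult (mult (inv_unit y) (y - a)) (inv_unit a)"
    using inv_unit_diff[OF assms] by (simp add: algebra_simps)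
  moreover have "inv_unit y - inv_unit a + mult (mult (inv_unit a) (y - a)) (inv_unit a)
      = mult (mult (inv_unit a - inv_unit y) (y - a)) (inv_unit a)"
    using inv_unit_diff[OF assms] by (simp add: mult_bil.diff_left)
  ultimately show ?thesis
    by simp
qed

lemma norm_inv_unit_le:
  assumes "a \<in> units" "y \<in> units"
    and small: "mult_bound * mult_bound * norm (y - a) * norm (inv_unit a) \<le> 1 / 2"
  shows "norm (inv_unit y) \<le> 2 * norm (inv_unit a)"
proof -
  have "inv_unit y = inv_unit a - mult (mult (inv_unit y) (y - a)) (inv_unit a)"
    using inv_unit_diff[OF assms(1,2)] by (simp add: algebra_simps)
  then have "norm (inv_unit y) \<le> norm (inv_unit a) + norm (mult (mult (inv_unit y) (y - a)) (inv_unit a))"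
    by (metis norm_triangle_ineq4)
  also have "norm (mult (mult (inv_unit y) (y - a)) (inv_unit a))
      \<le> mult_bound * (mult_bound * norm (inv_unit y) * norm (y - a)) * norm (inv_unit a)"
    by (intro norm_mult_le_of_le order_refl)
  also have "\<dots> = norm (inv_unit y) * (mult_bound * mult_bound * norm (y - a) * norm (inv_unit a))"
    by (simp add: ac_simps)
  also have "\<dots> \<le> norm (inv_unit y) * (1 / 2)"
    using small by (intro mult_left_mono) auto
  finally show ?thesis by simp
qed

lemma has_derivative_inv_unit:
  assumes a: "a \<in> units"
  shows "(inv_unit has_derivative (\<lambda>v. - mult (mult (inv_unit a) v) (inv_unit a))) (at a)"
proof -
  define b where "b = inv_unit a"
  define K where "K = mult_bound"
  obtain r0 where "r0 > 0" "ball a r0 \<subseteq> units"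
    using open_units a openE by blast
  define q where "q = 2 * K * K * (norm b + 1)"
  have "q > 0"
    using mult_bound_pos by (simp add: q_def K_def add_nonneg_pos)
  define r where "r = min r0 (1 / q)"
  have "r > 0"
    using \<open>r0 > 0\<close> \<open>q > 0\<close> by (simp add: r_def)
  show ?thesis
    unfolding b_def[symmetric]
  proof (rule has_derivative_if_quadratic_remainder[where M = "2 * K ^ 4 * norm b ^ 3"])
    show "bounded_linear (\<lambda>v. - mult (mult b v) b)"
      by (intro bounded_linear_minus bounded_linear_compose[OF mult_bil.bounded_linear_left]
          mult_bil.bounded_linear_right)
    show "r > 0" by fact
    fix y assume y: "norm (y - a) < r"
    define h where "h = y - a"
    have "y \<in> units"
      using y \<open>ball a r0 \<subseteq> units\<close> by (auto simp: r_def dist_norm norm_minus_commute)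
    have "norm h * q < 1"
      using y pos_less_divide_eq[OF \<open>q > 0\<close>] by (simp add: r_def h_def)
    then have "2 * (K * K * (norm b + 1) * norm h) < 1"
      by (simp add: q_def algebra_simps)
    moreover have "K * K * norm h * norm b \<le> K * K * (norm b + 1) * norm h"
      using mult_bound_pos by (simp add: K_def algebra_simps)
    ultimately have "K * K * norm h * norm b \<le> 1 / 2"
      by linarith
    then have norm_inv_y: "norm (inv_unit y) \<le> 2 * norm b"
      using norm_inv_unit_le[OF a \<open>y \<in> units\<close>] by (simp add: K_def b_def h_def)
    have "norm (inv_unit y - b - - mult (mult b h) b)
        = norm (mult (mult (mult (mult (inv_unit y) h) b) h) b)"
      using inv_unit_diff_second_order[OF a \<open>y \<in> units\<close>] by (simp add: b_def h_def)
    also have "\<dots> \<le> K * (K * (K * (K * norm (inv_unit y) * norm h) * norm b) * norm h) * norm b"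
      unfolding K_def by (intro norm_mult_le_of_le order_refl)
    also have "\<dots> = K ^ 4 * norm (inv_unit y) * norm b ^ 2 * (norm h)\<^sup>2"
      by (simp add: power2_eq_square power4_eq_xxxx)
    also have "\<dots> \<le> K ^ 4 * (2 * norm b) * norm b ^ 2 * (norm h)\<^sup>2"
      using norm_inv_y by (intro mult_right_mono mult_left_mono) auto
    also have "\<dots> = 2 * K ^ 4 * norm b ^ 3 * (norm h)\<^sup>2"
      by (simp add: power2_eq_square power3_eq_cube)
    finally show "norm (inv_unit y - inv_unit a - - mult (mult b (y - a)) b)
        \<le> 2 * K ^ 4 * norm b ^ 3 * (norm (y - a))\<^sup>2"
      by (simp add: b_def h_def)
  qed
qed

inductive_set rational_maps :: "('a \<Rightarrow> 'a) set" where
  const: "(\<lambda>a. c) \<in> rational_maps"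
| inverse: "inv_unit \<in> rational_maps"
| product: "f \<in> rational_maps \<Longrightarrow> g \<in> rational_maps \<Longrightarrow> (\<lambda>a. mult (f a) (g a)) \<in> rational_maps"
| sum: "f \<in> rational_maps \<Longrightarrow> g \<in> rational_maps \<Longrightarrow> (\<lambda>a. f a + g a) \<in> rational_maps"

lemma rational_maps_derivative:
  assumes "f \<in> rational_maps"
  shows "\<exists>D. (\<forall>x\<in>units. (f has_derivative D x) (at x)) \<and> (\<forall>v. (\<lambda>x. D x v) \<in> rational_maps)"
  using assms
proof induction
  case (const c)
  show ?case
    by (intro exI[of _ "\<lambda>x v. 0"]) (auto intro: rational_maps.const)
next
  case inverse
  have "(\<lambda>x. - mult (mult (inv_unit x) v) (inv_unit x)) = (\<lambda>x. mult (mult (inv_unit x) (- v)) (inv_unit x))"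
    for v by (simp add: mult_bil.minus_left mult_bil.minus_right)
  then show ?case
    using has_derivative_inv_unit rational_maps.intros
    by (intro exI[of _ "\<lambda>x v. - mult (mult (inv_unit x) v) (inv_unit x)"]) auto
next
  case (product f g)
  then obtain Df Dg
    where Df: "\<forall>x\<in>units. (f has_derivative Df x) (at x)" "\<forall>v. (\<lambda>x. Df x v) \<in> rational_maps"
      and Dg: "\<forall>x\<in>units. (g has_derivative Dg x) (at x)" "\<forall>v. (\<lambda>x. Dg x v) \<in> rational_maps"
    by blast
  show ?case
  proof (intro exI[of _ "\<lambda>x v. mult (f x) (Dg x v) + mult (Df x v) (g x)"] conjI ballI allI)
    show "((\<lambda>a. mult (f a) (g a)) has_derivative (\<lambda>v. mult (f x) (Dg x v) + mult (Df x v) (g x))) (at x)"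
      if "x \<in> units" for x
      using mult_bil.FDERIV Df(1) Dg(1) that by blast
    show "(\<lambda>x. mult (f x) (Dg x v) + mult (Df x v) (g x)) \<in> rational_maps" for v
      using rational_maps.sum[OF rational_maps.product[OF product.hyps(1) Dg(2)[rule_format]]
          rational_maps.product[OF Df(2)[rule_format] product.hyps(2)]] .
  qed
next
  case (sum f g)
  then obtain Df Dg
    where Df: "\<forall>x\<in>units. (f has_derivative Df x) (at x)" "\<forall>v. (\<lambda>x. Df x v) \<in> rational_maps"
      and Dg: "\<forall>x\<in>units. (g has_derivative Dg x) (at x)" "\<forall>v. (\<lambda>x. Dg x v) \<in> rational_maps"
    by blast
  then show ?case
    by (intro exI[of _ "\<lambda>x v. Df x v + Dg x v"])
      (auto intro: has_derivative_add rational_maps.sum)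
qed

lemma smooth_on_inv_unit: "smooth_on units inv_unit"
  using open_units rational_maps_derivative rational_maps.inverse
  by (rule smooth_on_derivative_closed_family)

lemma lie_group_on_units:
  assumes "smooth_on (units \<times> units) (\<lambda>(a, b). mult a b)"
  shows "lie_group_on units mult u"
  unfolding lie_group_on_def
  by (intro conjI ballI exI[of _ inv_unit] open_units unit_in_units mult_in_units assms
      smooth_on_inv_unit)
    (simp_all add: assoc mult_unit_left mult_unit_right inv_unit inv_unit_in_units)

lemma tangent_lie_bracket_eq: "tangent_lie_bracket mult u x y = mult x y - mult y x"
proof -
  have "vector_derivative (\<lambda>s. vector_derivative (\<lambda>t. mult (u + s *\<^sub>R x) (u + t *\<^sub>R y)) (at 0)) (at 0)
      = mult x y" for x y
  proof -
    have "((\<lambda>t. mult (u + s *\<^sub>R x) (u + t *\<^sub>R y)) has_vector_derivative y + s *\<^sub>R mult x y) (at 0)"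
      for s
      by (auto intro!: derivative_eq_intros mult_bil.has_vector_derivative
          simp: mult_bil.add_left mult_bil.scaleR_left mult_bil.zero_left mult_unit_left)
    then have "vector_derivative (\<lambda>t. mult (u + s *\<^sub>R x) (u + t *\<^sub>R y)) (at 0) = y + s *\<^sub>R mult x y"
      for s
      using vector_derivative_at by blast
    moreover have "((\<lambda>s. y + s *\<^sub>R mult x y) has_vector_derivative mult x y) (at 0)"
      by (auto intro!: derivative_eq_intros)
    ultimately show ?thesis
      using vector_derivative_at by simp
  qed
  then show ?thesis
    unfolding tangent_lie_bracket_def by simp
qed

end

theorem theorem5:
  fixes mult :: "'a::euclidean_space \<Rightarrow> 'a \<Rightarrow> 'a"
    and u :: 'a
    and P :: "'a bivector_field"
  assumes bil: "bilinear mult"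
    and assoc: "\<forall>a b c. mult (mult a b) c = mult a (mult b c)"
    and unit: "\<forall>a. mult u a = a \<and> mult a u = a"
    and poisson: "poisson_on UNIV P"
    and quad: "quadratic_bivector P"
    and compat: "poisson_map (UNIV \<times> UNIV) (prod_bivector P P) UNIV P (\<lambda>(a, b). mult a b)"
  shows "poisson_lie_group_on (units_of_alg mult u) mult u P
       \<and> (\<forall>x y. tangent_lie_bracket mult u x y = mult x y - mult y x)
       \<and> (\<forall>x \<xi> \<eta>. linear \<xi> \<longrightarrow> linear \<eta> \<longrightarrow>
            tangent_cocommutator P u x \<xi> \<eta> = delta_sym P x u \<xi> \<eta>)"
proof -
  interpret unital_algebra mult u
    using bil assoc unit by unfold_locales auto
  have "open (units \<times> units)"
    using open_units by (simp add: open_Times)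
  moreover have "(\<lambda>(a, b). mult a b) ` (units \<times> units) \<subseteq> units"
    using mult_in_units by auto
  ultimately have "poisson_map (units \<times> units) (prod_bivector P P) units P (\<lambda>(a, b). mult a b)"
    using poisson_map_subset[OF compat] by blast
  moreover from this have "lie_group_on units mult u"
    using lie_group_on_units unfolding poisson_map_def by blast
  moreover have "poisson_on units P"
    using poisson_on_subset[OF poisson open_units] by simp
  ultimately show ?thesis
    unfolding poisson_lie_group_on_def
    using tangent_lie_bracket_eq tangent_cocommutator_quadratic[OF quad] by blast
qed

end
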